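(* For every integer $n\ge1$, $$\sum_{k=0}^{2n-1}(-1)^k\binom{2n-1}{k}^2H_k=\frac{(-16)^n}{8n\binom{2n}{n}}.$$
   Context: $H_k=\sum_{i=1}^k1/i$ with $H_0=0$. *)

theory Defs
  imports "HOL-Analysis.Analysis"
begin

end

theory Submission
  imports Defs "HOL-Computational_Algebra.Polynomial"
begin

text \<open>
  Put \<open>m = 2n - 1\<close>. As \<open>m\<close> is odd, \<open>\<Sum>(-1)^k C(m,k)^2 = 0\<close>, so the sum equals
  \<open>-\<Sum>(-1)^k C(m,k)^2 (H_m - H_k)\<close>. Writing \<open>C(m,k)(H_m - H_k)\<close> as an alternating tail sum
  and reading off coefficients of \<open>(1 - X)^m (1 + X)^m = (1 - X^2)^m\<close> turns this into
  \<open>\<Sum>j<n. (-1)^j C(m,j)/(m - 2j)\<close>. By the symmetry \<open>j \<mapsto> m - j\<close> that is half of the full sum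
  over \<open>j \<le> m\<close>, which is the partial fraction expansion of \<open>m!/(x(x+1)\<dots>(x+m))\<close> at
  \<open>x = -m/2 = 1/2 - n\<close>; that product is \<open>(-1)^n ((1/2)\<^sub>n)^2\<close> with \<open>(1/2)\<^sub>n = (2n)!/(4^n n!)\<close>.
\<close>

lemma coeff_linear_poly_power':
  fixes a b :: "'a :: comm_semiring_1"
  shows "coeff ([:a, b:] ^ n) i = of_nat (n choose i) * b ^ i * a ^ (n - i)"
proof (cases "i \<le> n")
  case False
  have "degree ([:a, b:] ^ n) \<le> degree [:a, b:] * n"
    by (rule degree_power_le)
  also have "\<dots> \<le> n"
    by (cases "b = 0") simp_all
  finally have "degree ([:a, b:] ^ n) \<le> n" .
  then show ?thesis using False by (simp add: coeff_eq_0 binomial_eq_0)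
qed (rule coeff_linear_poly_power)

lemma sum_alternating_choose_convolution:
  "(\<Sum>k\<le>r. (-1::real)^k * real (m choose k) * real (m choose (r - k)))
     = (if even r then (-1)^(r div 2) * real (m choose (r div 2)) else 0)"
proof -
  have "(\<Sum>k\<le>r. (-1::real)^k * real (m choose k) * real (m choose (r - k)))
      = coeff ([:1, -1:] ^ m * [:1, 1:] ^ m) r"
    unfolding coeff_mult
    by (rule sum.cong) (auto simp: coeff_linear_poly_power')
  also have "[:1, -1:] ^ m * [:1, 1:] ^ m = (\<Sum>k\<le>m. monom (of_nat (m choose k) * (-1::real)^k) (2*k))"
  proof -
    have "[:1, -1:] * [:1, 1:] = monom (-1::real) 2 + 1"
      by (simp add: monom_altdef numeral_2_eq_2 one_pCons)
    then show ?thesis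
      by (simp add: power_mult_distrib[symmetric] binomial_ring monom_power smult_monom mult_ac of_nat_poly)
  qed
  also have "coeff \<dots> r = (if even r then (-1)^(r div 2) * real (m choose (r div 2)) else 0)"
    by (auto simp: coeff_sum mult.commute elim!: evenE intro!: sum.neutral)
  finally show ?thesis .
qed

lemma harm_eq_alternating_sum:
  "harm m = (\<Sum>i<m. (-1::real)^i * real (m choose (i+1)) / real (i+1))"
proof (induction m)
  case 0
  then show ?case by (simp add: harm_def)
next
  case (Suc m)
  have alternating: "(\<Sum>i\<le>m. (-1::real)^i * real (Suc m choose Suc i)) = 1"
  proof -
    have "(\<Sum>i\<le>Suc m. (-1::real)^i * of_nat (Suc m choose i)) = 0"
      by (rule choose_alternating_sum) simp
    then show ?thesis
      by (subst (asm) sum.atMost_Suc_shift) (simp add: sum_negf)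
  qed
  have absorb: "real (m choose i) / real (Suc i) = real (Suc m choose Suc i) / real (Suc m)" for i
  proof -
    have "real (Suc m) * real (m choose i) = real (Suc m choose Suc i) * real (Suc i)"
      using Suc_times_binomial_eq[of m i] by (metis of_nat_mult)
    then show ?thesis by (simp add: field_simps del: binomial_Suc_Suc of_nat_Suc)
  qed
  have "(\<Sum>i<Suc m. (-1::real)^i * real (Suc m choose (i+1)) / real (i+1))
      = (\<Sum>i<Suc m. (-1::real)^i * (real (m choose i) / real (Suc i)))
        + (\<Sum>i<Suc m. (-1::real)^i * real (m choose (i+1)) / real (i+1))"
    by (simp add: sum.distrib[symmetric] add_divide_distrib algebra_simps)
  also have "(\<Sum>i<Suc m. (-1::real)^i * (real (m choose i) / real (Suc i)))
      = (\<Sum>i\<le>m. (-1::real)^i * real (Suc m choose Suc i)) / real (Suc m)"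
    by (simp add: absorb sum_divide_distrib lessThan_Suc_atMost del: binomial_Suc_Suc of_nat_Suc)
  also have "\<dots> = 1 / real (Suc m)"
    by (simp only: alternating)
  also have "(\<Sum>i<Suc m. (-1::real)^i * real (m choose (i+1)) / real (i+1)) = harm m"
    using Suc by simp
  finally show ?case by (simp add: harm_Suc divide_inverse)
qed

lemma choose_mult_harm_diff:
  assumes "k \<le> m"
  shows "real (m choose k) * (harm m - harm k)
           = (\<Sum>i<m-k. (-1::real)^i * real (m choose (k+i+1)) / real (i+1))"
  using assms
proof (induction m arbitrary: k)
  case 0
  then show ?case by simp
next
  case (Suc m)
  show ?case
  proof (cases k)
    case 0
    then show ?thesis by (simp add: harm_eq_alternating_sum)
  next
    case (Suc j)
    show ?thesis
    proof (cases "k = Suc m")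
      case True
      then show ?thesis by simp
    next
      case False
      with Suc \<open>k \<le> Suc m\<close> have "j < m" by auto
      have pascal: "(\<Sum>i<Suc m - k. (-1::real)^i * real (Suc m choose (k+i+1)) / real (i+1))
          = (\<Sum>i<m-j. (-1::real)^i * real (m choose (j+i+1)) / real (i+1))
            + (\<Sum>i<m-k. (-1::real)^i * real (m choose (k+i+1)) / real (i+1))"
      proof -
        have "m - j = Suc (m - k)" using \<open>j < m\<close> Suc by simp
        then show ?thesis
          using Suc by (simp add: lessThan_Suc sum.distrib[symmetric] add_divide_distrib algebra_simps)
      qed
      have absorb: "real (m choose j) * real (Suc m) = real (Suc m choose k) * real k"
        using Suc_times_binomial_eq[of m j] Suc by (metis of_nat_mult mult.commute)
      have "real (Suc m choose k) * (harm (Suc m) - harm k)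
          = real (m choose j) * (harm m - harm j) + real (m choose k) * (harm m - harm k)"
      proof -
        have "real (Suc m choose k) = real (m choose j) + real (m choose k)"
          using Suc by simp
        then show ?thesis unfolding Suc harm_Suc using absorb Suc
          by (simp add: field_simps del: binomial_Suc_Suc of_nat_Suc)
      qed
      then show ?thesis
        using Suc.IH[of j] Suc.IH[of k] \<open>j < m\<close> Suc pascal by simp
    qed
  qed
qed

lemma sum_alternating_choose_div_pochhammer:
  fixes x :: "'a :: field_char_0"
  assumes "pochhammer x (Suc N) \<noteq> 0"
  shows "(\<Sum>l\<le>N. (-1)^l * of_nat (N choose l) / (x + of_nat l)) = fact N / pochhammer x (Suc N)"
  using assms
proof (induction N arbitrary: x)
  case 0
  then show ?case by simp
next
  case (Suc N)
  define F where "F = (\<lambda>N y. \<Sum>l\<le>N. (-1)^l * of_nat (N choose l) / (y + of_nat l) :: 'a)"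
  have pascal: "F (Suc N) x = F N x - F N (x + 1)"
  proof -
    have "F (Suc N) x = 1 / x + (\<Sum>l\<le>N. (-1)^Suc l * of_nat (N choose Suc l) / (x + of_nat (Suc l)))
        + (\<Sum>l\<le>N. (-1)^Suc l * of_nat (N choose l) / (x + of_nat (Suc l)))"
      unfolding F_def
      by (subst sum.atMost_Suc_shift) (auto simp: sum.distrib[symmetric] diff_divide_distrib add_divide_distrib ring_distribs intro!: sum.cong)
    also have "1 / x + (\<Sum>l\<le>N. (-1)^Suc l * of_nat (N choose Suc l) / (x + of_nat (Suc l)))
        = (\<Sum>l\<le>Suc N. (-1)^l * of_nat (N choose l) / (x + of_nat l))"
      by (subst sum.atMost_Suc_shift) simp
    also have "\<dots> = F N x"
      unfolding F_def by simp
    also have "(\<Sum>l\<le>N. (-1)^Suc l * of_nat (N choose l) / (x + of_nat (Suc l))) = - F N (x + 1)"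
      unfolding F_def by (simp add: sum_negf[symmetric] algebra_simps)
    finally show ?thesis by simp
  qed
  have P_left: "pochhammer x (Suc (Suc N)) = pochhammer x (Suc N) * (x + of_nat (Suc N))"
    by (rule pochhammer_Suc)
  have P_right: "pochhammer x (Suc (Suc N)) = x * pochhammer (x + 1) (Suc N)"
    by (rule pochhammer_rec)
  have A: "pochhammer x (Suc N) \<noteq> 0"
    using Suc.prems by (rule pochhammer_neq_0_mono) simp
  have B: "x \<noteq> 0" "pochhammer (x + 1) (Suc N) \<noteq> 0"
    using Suc.prems by (simp_all add: P_right)
  have "F (Suc N) x = fact N / pochhammer x (Suc N) - fact N / pochhammer (x + 1) (Suc N)"
    using pascal Suc.IH[OF A] Suc.IH[OF B(2)] unfolding F_def by simp
  also have "\<dots> = fact N * (x + of_nat (Suc N)) / pochhammer x (Suc (Suc N))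
                   - fact N * x / pochhammer x (Suc (Suc N))"
  proof -
    have "x + of_nat (Suc N) \<noteq> 0"
      using Suc.prems by (simp add: P_left del: of_nat_Suc)
    then have "fact N / pochhammer x (Suc N) = fact N * (x + of_nat (Suc N)) / pochhammer x (Suc (Suc N))"
      unfolding P_left by simp
    moreover have "fact N / pochhammer (x + 1) (Suc N) = fact N * x / pochhammer x (Suc (Suc N))"
      using B unfolding P_right by simp
    ultimately show ?thesis by simp
  qed
  also have "\<dots> = fact (Suc N) / pochhammer x (Suc (Suc N))"
    by (simp add: diff_divide_distrib[symmetric] algebra_simps)
  finally show ?case unfolding F_def .
qed

lemma pochhammer_half:
  "pochhammer (1/2 :: 'a :: field_char_0) n = fact (2*n) / (of_nat (4^n) * fact n)"
proof -
  have "fact (2*n) = (pochhammer (2 * (1/2)) (2*n) :: 'a)"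
    by (simp add: pochhammer_fact)
  also have "\<dots> = of_nat (2^(2*n)) * pochhammer (1/2) n * fact n"
    by (simp only: pochhammer_double pochhammer_fact) simp
  finally have "fact (2*n) = (of_nat (4^n) * pochhammer (1/2) n * fact n :: 'a)"
    by (simp add: power_mult)
  then show ?thesis by (simp add: field_simps)
qed

lemma pochhammer_half_minus:
  "pochhammer (1/2 - of_nat n :: 'a :: field_char_0) (2*n) = (-1)^n * pochhammer (1/2) n ^ 2"
proof -
  have "pochhammer (1/2 - of_nat n :: 'a) n = (-1)^n * pochhammer (1/2) n"
    using pochhammer_minus[of "of_nat n - 1/2 :: 'a" n] by simp
  then show ?thesis
    using pochhammer_product'[of "1/2 - of_nat n :: 'a" n n] by (simp add: mult_2 power2_eq_square)
qed

lemma sum_alternating_choose_squared_odd: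
  assumes "odd m"
  shows "(\<Sum>k\<le>m. (-1::real)^k * real (m choose k)^2) = 0"
proof -
  have "(\<Sum>k\<le>m. (-1::real)^k * real (m choose k)^2)
      = (\<Sum>k\<le>m. (-1::real)^k * real (m choose k) * real (m choose (m - k)))"
    by (rule sum.cong) (auto simp: power2_eq_square binomial_symmetric[symmetric])
  also have "\<dots> = 0"
    using sum_alternating_choose_convolution[of m m] assms by simp
  finally show ?thesis .
qed

lemma sum_triangle_swap:
  "(\<Sum>k\<le>(m::nat). \<Sum>i<m-k. F k i) = (\<Sum>i<m. \<Sum>k<m-i. F k i :: 'a :: comm_monoid_add)"
proof -
  have "(\<Sum>k\<le>m. \<Sum>i<m-k. F k i) = (\<Sum>k\<in>{..m}. \<Sum>i\<in>{i\<in>{..<m}. k+i<m}. F k i)"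
    by (rule sum.cong) (auto intro: sum.cong)
  also have "\<dots> = (\<Sum>i\<in>{..<m}. \<Sum>k\<in>{k\<in>{..m}. k+i<m}. F k i)"
    by (rule sum.swap_restrict) auto
  also have "\<dots> = (\<Sum>i<m. \<Sum>k<m-i. F k i)"
    by (rule sum.cong) (auto intro: sum.cong)
  finally show ?thesis .
qed

lemma sum_atMost_reflect_odd:
  fixes g :: "nat \<Rightarrow> 'a :: semiring_1"
  assumes "Suc m = 2 * n" and "\<And>l. l \<le> m \<Longrightarrow> g (m - l) = g l"
  shows "(\<Sum>l\<le>m. g l) = 2 * (\<Sum>l<n. g l)"
proof -
  have "(\<Sum>l\<le>m. g l) = sum g {0..<n} + sum g {n..<2*n}"
    using assms(1) by (simp add: sum.atLeastLessThan_concat lessThan_Suc_atMost[symmetric] lessThan_atLeast0)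
  also have "sum g {n..<2*n} = (\<Sum>i<n. g (m - i))"
    using assms(1) by (intro sum.reindex_bij_witness[where i="\<lambda>i. m - i" and j="\<lambda>l. m - l"]) auto
  also have "\<dots> = sum g {0..<n}"
    using assms by (auto simp: lessThan_atLeast0 intro!: sum.cong)
  finally show ?thesis by (simp add: mult_2 lessThan_atLeast0)
qed

lemma sum_alternating_choose_squared_harm_diff:
  assumes "Suc m = 2 * n"
  shows "(\<Sum>k\<le>m. (-1::real)^k * real (m choose k)^2 * (harm m - harm k))
           = (\<Sum>j<n. (-1)^j * real (m choose j) / (real m - 2 * real j))"
proof -
  define W where "W r = (if even r then (-1::real)^(r div 2) * real (m choose (r div 2)) else 0)" for r
  have "(\<Sum>k\<le>m. (-1::real)^k * real (m choose k)^2 * (harm m - harm k))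
      = (\<Sum>k\<le>m. \<Sum>i<m-k. (-1)^k * real (m choose k) * ((-1)^i * real (m choose (k+i+1)) / real (i+1)))"
    by (intro sum.cong) (simp_all add: power2_eq_square choose_mult_harm_diff sum_distrib_left mult.assoc)
  also have "\<dots> = (\<Sum>i<m. \<Sum>k<m-i. (-1)^k * real (m choose k) * ((-1)^i * real (m choose (k+i+1)) / real (i+1)))"
    by (rule sum_triangle_swap)
  also have "\<dots> = (\<Sum>i<m. (-1)^i / real (i+1) * W (m - Suc i))"
  proof (rule sum.cong)
    fix i assume "i \<in> {..<m}"
    then have "{..<m-i} = {..m - Suc i}" by auto
    moreover have "m choose (k+i+1) = m choose (m - Suc i - k)" if "k \<le> m - Suc i" for k
      using that \<open>i \<in> {..<m}\<close> by (subst binomial_symmetric) (auto simp: algebra_simps)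
    ultimately show "(\<Sum>k<m-i. (-1)^k * real (m choose k) * ((-1)^i * real (m choose (k+i+1)) / real (i+1)))
        = (-1)^i / real (i+1) * W (m - Suc i)"
      unfolding W_def sum_alternating_choose_convolution[symmetric] sum_distrib_left
      by (auto intro!: sum.cong)
  qed simp
  also have "\<dots> = (\<Sum>r<m. (-1)^(m - Suc r) / real (m - r) * W r)"
    by (subst sum.nat_diff_reindex[symmetric]) (auto intro!: sum.cong simp: Suc_diff_Suc)
  also have "\<dots> = (\<Sum>r<2*n. if even r then (-1)^(r div 2) * real (m choose (r div 2)) / (real m - real r) else 0)"
  proof -
    have "(-1::real)^(m - Suc r) = 1" if "even r" "r < m" for r
      using that assms by (intro neg_one_even_power) presburger
    then show ?thesis
      by (auto simp: W_def of_nat_diff lessThan_Suc simp flip: assms intro!: sum.cong)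
  qed
  also have "\<dots> = (\<Sum>j<n. (-1)^j * real (m choose j) / (real m - 2 * real j))"
    by (subst sum_split_even_odd) simp
  finally show ?thesis .
qed

lemma sum_alternating_choose_div_half_range:
  assumes "Suc m = 2 * n"
  shows "(\<Sum>j<n. (-1::real)^j * real (m choose j) / (real m - 2 * real j))
           = - fact m / (4 * pochhammer (1/2 - real n) (2*n))"
proof -
  define g where "g l = (-1::real)^l * real (m choose l) / (real m - 2 * real l)" for l
  define x where "x = 1/2 - real n"
  have nonzero: "pochhammer x (Suc m) \<noteq> 0"
    using assms by (simp add: x_def pochhammer_half_minus pochhammer_half)
  have "g (m - l) = g l" if "l \<le> m" for l
  proof -
    have "(-1::real)^(m - l) = - ((-1)^l)"
      using that assms by (auto simp: minus_one_power_iff) presburger+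
    moreover have "real m - 2 * real (m - l) = - (real m - 2 * real l)"
      using that by (simp add: of_nat_diff)
    ultimately show ?thesis
      using that by (simp add: g_def binomial_symmetric[symmetric] minus_divide_right)
  qed
  then have "(\<Sum>j<n. g j) = (\<Sum>l\<le>m. g l) / 2"
    by (simp add: sum_atMost_reflect_odd[OF assms])
  also have "(\<Sum>l\<le>m. g l) = - (\<Sum>l\<le>m. (-1)^l * real (m choose l) / (x + real l)) / 2"
  proof -
    have "g l = - ((-1)^l * real (m choose l) / (x + real l)) / 2" for l
    proof -
      have denom: "real m - 2 * real l = - (2 * (x + real l))"
        using arg_cong[OF assms, of real] by (simp add: x_def)
      show ?thesis
        unfolding g_def denom by (simp add: field_split_simps)
    qed
    then show ?thesis
      by (simp only: sum_negf[symmetric] sum_divide_distrib)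
  qed
  also have "(\<Sum>l\<le>m. (-1)^l * real (m choose l) / (x + real l)) = fact m / pochhammer x (2*n)"
    using sum_alternating_choose_div_pochhammer[OF nonzero] by (simp add: assms)
  finally show ?thesis by (simp add: g_def x_def)
qed

lemma fact_div_pochhammer_half_minus:
  assumes "Suc m = 2 * n"
  shows "fact m / (4 * pochhammer (1/2 - real n) (2*n)) = (-16::real)^n / (8 * real n * real ((2*n) choose n))"
proof -
  have "fact (2*n) = (real (Suc m) * fact m :: real)"
    by (simp only: assms[symmetric] fact_Suc of_nat_mult)
  also have "real (Suc m) = 2 * real n"
    by (simp only: assms of_nat_mult of_nat_numeral)
  finally have fact_m: "fact m = (fact (2*n) / (2 * real n) :: real)"
    using assms by auto
  have pochhammer_eq: "pochhammer (1/2 - real n) (2*n) = (-1)^n * (fact (2*n) / (4^n * fact n))^2"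
    by (simp add: pochhammer_half_minus pochhammer_half)
  have "(-16::real)^n = (-1)^n * 4^n * 4^n"
    by (simp flip: power_mult_distrib)
  then show ?thesis
    unfolding fact_m pochhammer_eq using assms
    by (simp add: binomial_fact field_simps power2_eq_square)
qed

theorem mainTheorem9:
  fixes n :: nat
  assumes "n \<ge> 1"
  shows "(\<Sum>k=0..2*n-1. (-1::real)^k * (real ((2*n-1) choose k))^2 * harm k)
         = (-16::real)^n / (8 * real n * real ((2*n) choose n))"
proof -
  define m where "m = 2*n - 1"
  have mn: "Suc m = 2 * n"
    using assms by (simp add: m_def)
  then have "odd m"
    by presburger
  have "(\<Sum>k=0..2*n-1. (-1::real)^k * (real ((2*n-1) choose k))^2 * harm k)
      = harm m * (\<Sum>k\<le>m. (-1)^k * real (m choose k)^2)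
        - (\<Sum>k\<le>m. (-1)^k * real (m choose k)^2 * (harm m - harm k))"
    by (simp add: m_def atLeast0AtMost sum_distrib_left sum_subtractf[symmetric] algebra_simps)
  also have "\<dots> = fact m / (4 * pochhammer (1/2 - real n) (2*n))"
    using mn \<open>odd m\<close>
    by (simp add: sum_alternating_choose_squared_odd sum_alternating_choose_squared_harm_diff
        sum_alternating_choose_div_half_range)
  also have "\<dots> = (-16::real)^n / (8 * real n * real ((2*n) choose n))"
    using mn by (rule fact_div_pochhammer_half_minus)
  finally show ?thesis .
qed

end
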